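(* Let $1<p<\infty$ and let $X$ be a Banach space isomorphic to $\ell_p$. Then for every nonempty bounded closed convex $C\subset X$, every $\mathfrak{cm}$-nonexpansive map $T\colon C\to C$ has a fixed point.
   Context: For a bounded convex set $C$, a nonexpansive map $T\colon C\to C$ is $\mathfrak{cm}$-nonexpansive if for all $n\in\mathbb{N}$, $y\in C$ and sequences $(u_i)_{i=1}^\infty\subset C$: $\limsup_{i\to\infty}\sup_{A\subset\{1,\dots,n\}}\|\sum_{k\in A}(Tu_{i+k}-Ty)\|\le\limsup_{i\to\infty}\sup_{A\subset\{1,\dots,n\}}\|\sum_{k\in A}(u_{i+k}-y)\|$, where $\|\cdot\|$ is the norm of $X$. *)

theory Defs
  imports "HOL-Analysis.Analysis"
begin

definition lp_space :: "real \<Rightarrow> (nat \<Rightarrow> real) set" where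
  "lp_space p = {x. summable (\<lambda>n. \<bar>x n\<bar> powr p)}"

definition lp_norm :: "real \<Rightarrow> (nat \<Rightarrow> real) \<Rightarrow> real" where
  "lp_norm p x = (\<Sum>n. \<bar>x n\<bar> powr p) powr (1 / p)"

definition isomorphic_to_lp :: "real \<Rightarrow> 'a::real_normed_vector itself \<Rightarrow> bool" where
  "isomorphic_to_lp p _ \<longleftrightarrow>
     (\<exists>L :: 'a \<Rightarrow> (nat \<Rightarrow> real).
        (\<forall>x y n. L (x + y) n = L x n + L y n) \<and>
        (\<forall>c x n. L (c *\<^sub>R x) n = c * L x n) \<and>
        bij_betw L UNIV (lp_space p) \<and>
        (\<exists>a b. 0 < a \<and> 0 < b \<and>
           (\<forall>x. a * norm x \<le> lp_norm p (L x) \<and> lp_norm p (L x) \<le> b * norm x)))"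

definition nonexpansive_on :: "'a::real_normed_vector set \<Rightarrow> ('a \<Rightarrow> 'a) \<Rightarrow> bool" where
  "nonexpansive_on C T \<longleftrightarrow> (\<forall>x\<in>C. \<forall>y\<in>C. norm (T x - T y) \<le> norm (x - y))"

definition cm_quantity :: "nat \<Rightarrow> (nat \<Rightarrow> 'a::real_normed_vector) \<Rightarrow> 'a \<Rightarrow> ereal" where
  "cm_quantity n v y =
     limsup (\<lambda>i. ereal (Max ((\<lambda>A. norm (\<Sum>k\<in>A. v (i + k) - y)) ` Pow {1..n})))"

definition cm_nonexpansive :: "'a::real_normed_vector set \<Rightarrow> ('a \<Rightarrow> 'a) \<Rightarrow> bool" where
  "cm_nonexpansive C T \<longleftrightarrow>
     (\<forall>x\<in>C. T x \<in> C) \<and> nonexpansive_on C T \<and>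
     (\<forall>n::nat. \<forall>y\<in>C. \<forall>u::nat \<Rightarrow> 'a. (\<forall>i. u i \<in> C) \<longrightarrow>
        cm_quantity n (\<lambda>i. T (u i)) (T y) \<le> cm_quantity n u y)"

end

theory Submission
  imports Defs "HOL-Complex_Analysis.Great_Picard"
begin

(* Take an approximate fixed point sequence of T in C. Through the isomorphism with l_p a
   subsequence converges coordinatewise to some y, and a gliding hump argument splits a further
   subsequence as u_j - y = beta_j + eps_j with disjointly supported blocks beta_j and errors
   with norm at most 2^-j. Disjointness in l_p gives
   norm (sum_{j in B} (u_j - y)) <= K |B|^(1/p) + c, which is o(|B|) because p > 1.
   Hence the Cesaro means of (u_j) converge to y, so y lies in C, and the cm-condition for the
   windows of length n of (u_j) yields n norm (y - T y) <= 2 (K n^(1/p) + c) + 1 for every n,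
   forcing T y = y. *)

section \<open>Estimates in l_p\<close>

definition lp_sum :: "real \<Rightarrow> (nat \<Rightarrow> real) \<Rightarrow> real" where
  "lp_sum p x = (\<Sum>n. \<bar>x n\<bar> powr p)"

lemma lp_sum_nonneg: "x \<in> lp_space p \<Longrightarrow> 0 \<le> lp_sum p x"
  unfolding lp_sum_def lp_space_def by (auto intro: suminf_nonneg)

lemma lp_norm_eq_lp_sum: "lp_norm p x = lp_sum p x powr (1 / p)"
  unfolding lp_norm_def lp_sum_def ..

lemma lp_norm_le_iff:
  assumes "0 < p" "0 \<le> M" "x \<in> lp_space p"
  shows "lp_norm p x \<le> M \<longleftrightarrow> lp_sum p x \<le> M powr p"
proof
  assume "lp_norm p x \<le> M"
  then have "(lp_sum p x powr (1 / p)) powr p \<le> M powr p"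
    unfolding lp_norm_eq_lp_sum using assms by (intro powr_mono2) auto
  then show "lp_sum p x \<le> M powr p"
    using assms lp_sum_nonneg by (simp add: powr_powr)
next
  assume "lp_sum p x \<le> M powr p"
  then have "lp_sum p x powr (1 / p) \<le> (M powr p) powr (1 / p)"
    using assms lp_sum_nonneg by (intro powr_mono2) auto
  then show "lp_norm p x \<le> M"
    using assms by (simp add: lp_norm_eq_lp_sum powr_powr)
qed

lemma abs_le_lp_norm:
  assumes "0 < p" "x \<in> lp_space p"
  shows "\<bar>x n\<bar> \<le> lp_norm p x"
proof -
  have "\<bar>x n\<bar> powr p \<le> lp_sum p x"
    using sum_le_suminf[of "\<lambda>n. \<bar>x n\<bar> powr p" "{n}"] assms
    unfolding lp_sum_def lp_space_def by auto
  then have "(\<bar>x n\<bar> powr p) powr (1 / p) \<le> lp_sum p x powr (1 / p)"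
    using assms by (intro powr_mono2) auto
  then show ?thesis
    using assms by (simp add: powr_powr lp_norm_eq_lp_sum)
qed

lemma lp_space_mono:
  assumes "y \<in> lp_space p" "\<And>n. \<bar>x n\<bar> \<le> \<bar>y n\<bar>" "0 < p"
  shows "x \<in> lp_space p"
proof -
  have "norm (\<bar>x n\<bar> powr p) \<le> \<bar>y n\<bar> powr p" for n
    using powr_mono2[of p "\<bar>x n\<bar>" "\<bar>y n\<bar>"] assms(2,3) by simp
  then show ?thesis
    using assms(1) unfolding lp_space_def by (auto intro: summable_comparison_test')
qed

lemma lp_norm_mono:
  assumes "y \<in> lp_space p" "\<And>n. \<bar>x n\<bar> \<le> \<bar>y n\<bar>" "0 < p"
  shows "lp_norm p x \<le> lp_norm p y"
proof -
  have "\<bar>x n\<bar> powr p \<le> \<bar>y n\<bar> powr p" for n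
    using powr_mono2[of p "\<bar>x n\<bar>" "\<bar>y n\<bar>"] assms(2,3) by simp
  then have "lp_sum p x \<le> lp_sum p y"
    using assms(1) lp_space_mono[OF assms] unfolding lp_sum_def lp_space_def
    by (intro suminf_le) auto
  then show ?thesis
    unfolding lp_norm_eq_lp_sum using assms lp_space_mono[OF assms]
    by (intro powr_mono2) (auto intro: lp_sum_nonneg)
qed

lemma lp_space_pointwise_limit:
  assumes p: "0 < p" and x: "\<And>i. x i \<in> lp_space p" and K: "\<And>i. lp_norm p (x i) \<le> K"
    and lim: "\<And>n. (\<lambda>i. x i n) \<longlonglongrightarrow> z n"
  shows "z \<in> lp_space p"
  unfolding lp_space_def
proof (safe intro!: bounded_imp_summable)
  have "0 \<le> K"
    using K[of 0] unfolding lp_norm_def by (meson order_trans powr_ge_zero)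
  fix N
  have "(\<lambda>i. \<Sum>n\<le>N. \<bar>x i n\<bar> powr p) \<longlonglongrightarrow> (\<Sum>n\<le>N. \<bar>z n\<bar> powr p)"
    using p lim by (intro tendsto_sum tendsto_powr2 tendsto_rabs) auto
  moreover have "(\<Sum>n\<le>N. \<bar>x i n\<bar> powr p) \<le> K powr p" for i
  proof -
    have "(\<Sum>n\<le>N. \<bar>x i n\<bar> powr p) \<le> lp_sum p (x i)"
      using x[of i] unfolding lp_sum_def lp_space_def by (intro sum_le_suminf) auto
    also have "\<dots> \<le> K powr p"
      using lp_norm_le_iff[OF p \<open>0 \<le> K\<close> x] K by blast
    finally show ?thesis .
  qed
  ultimately show "(\<Sum>n\<le>N. \<bar>z n\<bar> powr p) \<le> K powr p"
    by (intro LIMSEQ_le_const2) auto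
qed auto

lemma abs_sum_powr_disjoint:
  fixes b :: "'k \<Rightarrow> real"
  assumes "finite A" and disj: "\<And>k k'. k \<in> A \<Longrightarrow> k' \<in> A \<Longrightarrow> k \<noteq> k' \<Longrightarrow> b k = 0 \<or> b k' = 0"
  shows "\<bar>\<Sum>k\<in>A. b k\<bar> powr p = (\<Sum>k\<in>A. \<bar>b k\<bar> powr p)"
proof (cases "\<exists>k0\<in>A. b k0 \<noteq> 0")
  case True
  then obtain k0 where k0: "k0 \<in> A" "b k0 \<noteq> 0" by blast
  then have "b k = 0" if "k \<in> A - {k0}" for k
    using disj that by blast
  then show ?thesis
    using assms k0 by (simp add: sum.remove)
qed simp

lemma lp_sum_disjoint_sum:
  fixes b :: "'k \<Rightarrow> nat \<Rightarrow> real"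
  assumes "finite A" and lp: "\<And>k. k \<in> A \<Longrightarrow> b k \<in> lp_space p"
    and disj: "\<And>n k k'. k \<in> A \<Longrightarrow> k' \<in> A \<Longrightarrow> k \<noteq> k' \<Longrightarrow> b k n = 0 \<or> b k' n = 0"
  shows "(\<lambda>n. \<Sum>k\<in>A. b k n) \<in> lp_space p"
    and "lp_sum p (\<lambda>n. \<Sum>k\<in>A. b k n) = (\<Sum>k\<in>A. lp_sum p (b k))"
proof -
  have pw: "\<bar>\<Sum>k\<in>A. b k n\<bar> powr p = (\<Sum>k\<in>A. \<bar>b k n\<bar> powr p)" for n
    by (rule abs_sum_powr_disjoint[OF \<open>finite A\<close>, of "\<lambda>k. b k n"]) (simp add: disj)
  have "summable (\<lambda>n. \<Sum>k\<in>A. \<bar>b k n\<bar> powr p)"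
    using lp by (intro summable_sum) (auto simp: lp_space_def)
  then show "(\<lambda>n. \<Sum>k\<in>A. b k n) \<in> lp_space p"
    unfolding lp_space_def by (simp add: pw)
  show "lp_sum p (\<lambda>n. \<Sum>k\<in>A. b k n) = (\<Sum>k\<in>A. lp_sum p (b k))"
    unfolding lp_sum_def pw using lp by (intro suminf_sum) (auto simp: lp_space_def)
qed

lemma lp_norm_disjoint_sum_le:
  fixes b :: "'k \<Rightarrow> nat \<Rightarrow> real"
  assumes p: "0 < p" and "finite A" "0 \<le> M"
    and lp: "\<And>k. k \<in> A \<Longrightarrow> b k \<in> lp_space p"
    and M: "\<And>k. k \<in> A \<Longrightarrow> lp_norm p (b k) \<le> M"
    and disj: "\<And>n k k'. k \<in> A \<Longrightarrow> k' \<in> A \<Longrightarrow> k \<noteq> k' \<Longrightarrow> b k n = 0 \<or> b k' n = 0"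
  shows "lp_norm p (\<lambda>n. \<Sum>k\<in>A. b k n) \<le> real (card A) powr (1 / p) * M"
proof -
  have "lp_sum p (\<lambda>n. \<Sum>k\<in>A. b k n) = (\<Sum>k\<in>A. lp_sum p (b k))"
    by (rule lp_sum_disjoint_sum(2)[OF assms(2) lp disj])
  also have "\<dots> \<le> real (card A) * M powr p"
    using sum_bounded_above[of A "\<lambda>k. lp_sum p (b k)" "M powr p"]
      lp_norm_le_iff[OF p \<open>0 \<le> M\<close> lp] M by auto
  also have "\<dots> = (real (card A) powr (1 / p) * M) powr p"
    using p \<open>0 \<le> M\<close> by (simp add: powr_mult powr_powr)
  finally show ?thesis
    using lp_norm_le_iff[OF p _ lp_sum_disjoint_sum(1)[OF assms(2) lp disj]] \<open>0 \<le> M\<close> by simp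
qed

lemma lp_sum_outside_block:
  assumes "x \<in> lp_space p" "lo \<le> hi"
  shows "lp_sum p (\<lambda>n. if lo \<le> n \<and> n < hi then 0 else x n)
    = (\<Sum>n<lo. \<bar>x n\<bar> powr p) + (\<Sum>j. \<bar>x (j + hi)\<bar> powr p)"
proof -
  define y where "y n = (if lo \<le> n \<and> n < hi then 0 else x n)" for n
  have "norm (\<bar>y n\<bar> powr p) \<le> \<bar>x n\<bar> powr p" for n
    by (simp add: y_def)
  then have "summable (\<lambda>n. \<bar>y n\<bar> powr p)"
    using assms(1) unfolding lp_space_def by (auto intro: summable_comparison_test')
  then have "lp_sum p y = (\<Sum>j. \<bar>y (j + hi)\<bar> powr p) + (\<Sum>n<hi. \<bar>y n\<bar> powr p)"
    unfolding lp_sum_def by (rule suminf_split_initial_segment)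
  also have "(\<Sum>n<hi. \<bar>y n\<bar> powr p) = (\<Sum>n<lo. \<bar>x n\<bar> powr p)"
  proof -
    have "(\<Sum>n<hi. \<bar>y n\<bar> powr p) = (\<Sum>n<lo. \<bar>y n\<bar> powr p) + (\<Sum>n\<in>{lo..<hi}. \<bar>y n\<bar> powr p)"
      using assms(2) by (simp add: atLeast0LessThan[symmetric] sum.atLeastLessThan_concat)
    then show ?thesis by (simp add: y_def)
  qed
  finally show ?thesis by (simp add: y_def add.commute)
qed

section \<open>The gliding hump\<close>

lemma gliding_hump_step:
  fixes w :: "nat \<Rightarrow> nat \<Rightarrow> real"
  assumes p: "0 < p" and lp: "\<And>i. w i \<in> lp_space p" and null: "\<And>n. (\<lambda>i. w i n) \<longlonglongrightarrow> 0"
    and d: "0 < d"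
  obtains t m where "T0 \<le> t" "M < m"
    "(\<Sum>n<M. \<bar>w t n\<bar> powr p) < d" "(\<Sum>j. \<bar>w t (j + m)\<bar> powr p) < d"
proof -
  have "(\<lambda>i. \<Sum>n<M. \<bar>w i n\<bar> powr p) \<longlonglongrightarrow> (\<Sum>n<M. \<bar>0::real\<bar> powr p)"
    using p null by (intro tendsto_sum tendsto_powr2 tendsto_rabs) auto
  then have "eventually (\<lambda>i. (\<Sum>n<M. \<bar>w i n\<bar> powr p) < d) sequentially"
    using d by (simp add: order_tendstoD)
  then obtain N where N: "\<And>i. N \<le> i \<Longrightarrow> (\<Sum>n<M. \<bar>w i n\<bar> powr p) < d"
    unfolding eventually_sequentially by blast
  define t where "t = max N T0"
  have "summable (\<lambda>n. \<bar>w t n\<bar> powr p)"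
    using lp unfolding lp_space_def by auto
  from suminf_exist_split[OF d this] obtain N' where
    N': "\<And>n. N' \<le> n \<Longrightarrow> norm (\<Sum>j. \<bar>w t (j + n)\<bar> powr p) < d" by blast
  define m where "m = max N' (Suc M)"
  show ?thesis
  proof (rule that)
    show "T0 \<le> t" "M < m" "(\<Sum>n<M. \<bar>w t n\<bar> powr p) < d"
      using N by (auto simp: t_def m_def)
    show "(\<Sum>j. \<bar>w t (j + m)\<bar> powr p) < d"
      using N'[of m] by (auto simp: m_def abs_less_iff)
  qed
qed

lemma gliding_hump:
  fixes w :: "nat \<Rightarrow> nat \<Rightarrow> real"
  assumes p: "0 < p" and lp: "\<And>i. w i \<in> lp_space p" and null: "\<And>n. (\<lambda>i. w i n) \<longlonglongrightarrow> 0"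
    and e: "\<And>k. 0 < e k"
  obtains t m where "strict_mono t" "strict_mono m"
    "\<And>k. lp_sum p (\<lambda>n. if m k \<le> n \<and> n < m (Suc k) then 0 else w (t k) n) \<le> e k"
proof -
  have half_e: "0 < e k / 2" for k
    using e[of k] by simp
  \<comment> \<open>The k-th triple chosen below is (t k, m k, m (Suc k)).\<close>
  define P where "P k tlh \<longleftrightarrow> (case tlh of (t, lo, hi) \<Rightarrow> lo < hi \<and>
      (\<Sum>n<lo. \<bar>w t n\<bar> powr p) < e k / 2 \<and> (\<Sum>j. \<bar>w t (j + hi)\<bar> powr p) < e k / 2)"
    for k and tlh :: "nat \<times> nat \<times> nat"
  define Q where "Q tlh tlh' \<longleftrightarrow> fst tlh < fst tlh' \<and> fst (snd tlh') = snd (snd tlh)"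
    for tlh tlh' :: "nat \<times> nat \<times> nat"
  have "\<exists>f. \<forall>k. P k (f k) \<and> Q (f k) (f (Suc k))"
  proof (rule dependent_nat_choice)
    obtain t m where "0 \<le> t" "0 < m" "(\<Sum>n<0. \<bar>w t n\<bar> powr p) < e 0 / 2"
      "(\<Sum>j. \<bar>w t (j + m)\<bar> powr p) < e 0 / 2"
      using half_e[of 0] by (rule gliding_hump_step[OF p lp null])
    then show "\<exists>tlh. P 0 tlh"
      using e[of 0] unfolding P_def by (intro exI[of _ "(t, 0, m)"]) simp
  next
    fix tlh :: "nat \<times> nat \<times> nat" and k
    obtain t lo hi where tlh: "tlh = (t, lo, hi)" by (cases tlh)
    obtain t' m' where "Suc t \<le> t'" "hi < m'" "(\<Sum>n<hi. \<bar>w t' n\<bar> powr p) < e (Suc k) / 2"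
      "(\<Sum>j. \<bar>w t' (j + m')\<bar> powr p) < e (Suc k) / 2"
      using half_e[of "Suc k"] by (rule gliding_hump_step[OF p lp null])
    then show "\<exists>tlh'. P (Suc k) tlh' \<and> Q tlh tlh'"
      unfolding P_def Q_def tlh by (intro exI[of _ "(t', hi, m')"]) auto
  qed
  then obtain f where f: "\<And>k. P k (f k)" "\<And>k. Q (f k) (f (Suc k))" by blast
  define t where "t k = fst (f k)" for k
  define m where "m k = fst (snd (f k))" for k
  have m_Suc: "m (Suc k) = snd (snd (f k))" for k
    using f(2)[of k] unfolding Q_def m_def by simp
  have block: "m k < m (Suc k)" "(\<Sum>n<m k. \<bar>w (t k) n\<bar> powr p) < e k / 2"
    "(\<Sum>j. \<bar>w (t k) (j + m (Suc k))\<bar> powr p) < e k / 2" for k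
    using f(1)[of k] unfolding P_def m_Suc unfolding t_def m_def by (auto split: prod.splits)
  show ?thesis
  proof (rule that)
    show "strict_mono t"
      using f(2) unfolding Q_def t_def by (simp add: strict_mono_Suc_iff)
    show "strict_mono m"
      using block(1) by (simp add: strict_mono_Suc_iff)
    show "lp_sum p (\<lambda>n. if m k \<le> n \<and> n < m (Suc k) then 0 else w (t k) n) \<le> e k" for k
      using lp_sum_outside_block[OF lp less_imp_le[OF block(1)]] block(2,3)[of k] by simp
  qed
qed

lemma strict_mono_blocks_disjoint:
  assumes m: "strict_mono m" and "j \<noteq> j'" "m j \<le> n" "n < m (Suc j)"
  shows "\<not> (m j' \<le> n \<and> n < m (Suc j'))"
proof
  assume "m j' \<le> n \<and> n < m (Suc j')"
  moreover have "m (Suc j) \<le> m j'" if "j < j'"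
    using that m by (simp add: strict_mono_less_eq Suc_leI)
  moreover have "m (Suc j') \<le> m j" if "j' < j"
    using that m by (simp add: strict_mono_less_eq Suc_leI)
  ultimately show False
    using assms(2-) by (cases "j < j'") auto
qed

lemma sum_half_powers_le_two:
  assumes "finite B"
  shows "(\<Sum>j\<in>B. (1 / 2 :: real) ^ j) \<le> 2"
proof -
  have "(\<Sum>j\<in>B. (1 / 2 :: real) ^ j) \<le> (\<Sum>j. (1 / 2 :: real) ^ j)"
    by (rule sum_le_suminf[OF summable_geometric assms]) auto
  also have "\<dots> = 2"
    by (simp add: suminf_geometric)
  finally show ?thesis .
qed

section \<open>Spaces isomorphic to l_p\<close>

locale lp_isomorphism =
  fixes p :: real and L :: "'a::real_normed_vector \<Rightarrow> nat \<Rightarrow> real" and a b :: real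
  assumes p_pos: "0 < p"
    and L_add: "L (x + y) n = L x n + L y n"
    and L_scaleR: "L (c *\<^sub>R x) n = c * L x n"
    and L_bij: "bij_betw L UNIV (lp_space p)"
    and a_pos: "0 < a" and b_pos: "0 < b"
    and norm_le_lp_norm: "a * norm x \<le> lp_norm p (L x)"
    and lp_norm_le_norm: "lp_norm p (L x) \<le> b * norm x"

lemma isomorphic_to_lpE:
  assumes "0 < p" "isomorphic_to_lp p TYPE('a::real_normed_vector)"
  obtains L :: "'a::real_normed_vector \<Rightarrow> nat \<Rightarrow> real" and a b where "lp_isomorphism p L a b"
proof -
  from assms(2) obtain L :: "'a \<Rightarrow> nat \<Rightarrow> real" and a b where
    "\<forall>x y n. L (x + y) n = L x n + L y n" "\<forall>c x n. L (c *\<^sub>R x) n = c * L x n"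
    "bij_betw L UNIV (lp_space p)" "0 < a" "0 < b"
    "\<forall>x. a * norm x \<le> lp_norm p (L x) \<and> lp_norm p (L x) \<le> b * norm x"
    unfolding isomorphic_to_lp_def by auto
  then show thesis
    using assms(1) by (intro that[of L a b]) (unfold_locales, auto)
qed

context lp_isomorphism
begin

lemma L_zero: "L 0 n = 0"
  using L_scaleR[of 0 0 n] by simp

lemma L_diff: "L (x - y) n = L x n - L y n"
  using L_add[of x "(-1) *\<^sub>R y" n] L_scaleR[of "-1" y n] by simp

lemma L_sum: "finite B \<Longrightarrow> L (\<Sum>j\<in>B. f j) n = (\<Sum>j\<in>B. L (f j) n)"
  by (induction B rule: finite_induct) (auto simp: L_zero L_add)

lemma L_in_lp_space: "L x \<in> lp_space p"
  using L_bij by (rule bij_betw_apply) simp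

lemma L_surj:
  assumes "z \<in> lp_space p"
  obtains x where "L x = z"
proof -
  have "z \<in> range L"
    using assms L_bij by (simp add: bij_betw_def)
  then show thesis
    using that by blast
qed

lemma norm_le_if_lp_norm_le: "lp_norm p (L x) \<le> r \<Longrightarrow> norm x \<le> r / a"
  using norm_le_lp_norm[of x] a_pos by (simp add: field_simps)

lemma coordinatewise_convergent_subsequence:
  fixes x :: "nat \<Rightarrow> 'a"
  assumes "bounded (range x)"
  obtains s y where "strict_mono s" "\<And>n. (\<lambda>i. L (x (s i)) n) \<longlonglongrightarrow> L y n"
proof -
  obtain R where R: "\<And>i. norm (x i) \<le> R"
    using assms by (auto simp: bounded_iff)
  have LR: "lp_norm p (L (x i)) \<le> b * R" for i
    using order_trans[OF lp_norm_le_norm mult_left_mono[OF R]] b_pos by simp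
  have bound: "norm (L (x i) n) \<le> b * R" for i n
    using abs_le_lp_norm[OF p_pos L_in_lp_space, of "x i" n] LR[of i] by simp
  obtain s where s: "strict_mono s" and conv: "\<And>n. \<exists>l. (\<lambda>i. L (x (s i)) n) \<longlonglongrightarrow> l"
    by (rule function_convergent_subsequence[of "UNIV :: nat set" "\<lambda>i n. L (x i) n" "b * R"])
      (use bound in auto)
  define z where "z n = lim (\<lambda>i. L (x (s i)) n)" for n
  have z: "(\<lambda>i. L (x (s i)) n) \<longlonglongrightarrow> z n" for n
    using conv[of n] unfolding z_def by (metis limI)
  have "z \<in> lp_space p"
    using LR by (intro lp_space_pointwise_limit[OF p_pos L_in_lp_space _ z])
  then obtain y where "L y = z"
    by (rule L_surj)
  show ?thesis
    by (rule that[of s y, OF s]) (use z \<open>L y = z\<close> in simp)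
qed

lemma norm_sum_disjoint_le:
  assumes "finite B" "0 \<le> M" "\<And>j. j \<in> B \<Longrightarrow> lp_norm p (L (\<beta> j)) \<le> M"
    and "\<And>n j j'. j \<in> B \<Longrightarrow> j' \<in> B \<Longrightarrow> j \<noteq> j' \<Longrightarrow> L (\<beta> j) n = 0 \<or> L (\<beta> j') n = 0"
  shows "norm (\<Sum>j\<in>B. \<beta> j) \<le> real (card B) powr (1 / p) * M / a"
proof (rule norm_le_if_lp_norm_le)
  have "L (\<Sum>j\<in>B. \<beta> j) = (\<lambda>n. \<Sum>j\<in>B. L (\<beta> j) n)"
    by (simp add: fun_eq_iff L_sum[OF assms(1)])
  then show "lp_norm p (L (\<Sum>j\<in>B. \<beta> j)) \<le> real (card B) powr (1 / p) * M"
    using lp_norm_disjoint_sum_le[where b = "\<lambda>j. L (\<beta> j)", OF p_pos assms(1,2) L_in_lp_space assms(3,4)]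
    by simp
qed

lemma norm_sum_almost_disjoint_le:
  fixes v :: "nat \<Rightarrow> 'a"
  assumes m: "strict_mono m" and "0 \<le> M" and M: "\<And>j. lp_norm p (L (v j)) \<le> M"
    and small: "\<And>j. lp_sum p (\<lambda>n. if m j \<le> n \<and> n < m (Suc j) then 0 else L (v j) n)
      \<le> ((1 / 2) ^ j) powr p"
    and "finite B"
  shows "norm (\<Sum>j\<in>B. v j) \<le> M / a * real (card B) powr (1 / p) + 2 / a"
proof -
  define block where "block j n = (if m j \<le> n \<and> n < m (Suc j) then L (v j) n else 0)" for j n
  have block_le: "\<bar>block j n\<bar> \<le> \<bar>L (v j) n\<bar>" for j n
    by (simp add: block_def)
  have "\<exists>\<beta>. L \<beta> = block j" for j
    using L_surj[OF lp_space_mono[OF L_in_lp_space block_le p_pos]] by blast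
  then obtain \<beta> where L\<beta>: "\<And>j. L (\<beta> j) = block j"
    by metis
  have blocks: "norm (\<Sum>j\<in>B. \<beta> j) \<le> real (card B) powr (1 / p) * M / a"
  proof (rule norm_sum_disjoint_le[OF \<open>finite B\<close> \<open>0 \<le> M\<close>])
    show "lp_norm p (L (\<beta> j)) \<le> M" for j
      unfolding L\<beta> using order_trans[OF lp_norm_mono[OF L_in_lp_space block_le p_pos] M] .
    show "L (\<beta> j) n = 0 \<or> L (\<beta> j') n = 0" if "j \<noteq> j'" for j j' n
      unfolding L\<beta> block_def using strict_mono_blocks_disjoint[OF m that] by auto
  qed
  have tail: "norm (v j - \<beta> j) \<le> (1 / 2) ^ j / a" for j
  proof (rule norm_le_if_lp_norm_le)
    have "L (v j - \<beta> j) = (\<lambda>n. if m j \<le> n \<and> n < m (Suc j) then 0 else L (v j) n)"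
      by (auto simp: L_diff L\<beta> block_def)
    then have "lp_sum p (L (v j - \<beta> j)) \<le> ((1 / 2) ^ j) powr p"
      using small[of j] by simp
    then show "lp_norm p (L (v j - \<beta> j)) \<le> (1 / 2) ^ j"
      using lp_norm_le_iff[OF p_pos _ L_in_lp_space] by simp
  qed
  have "(\<Sum>j\<in>B. norm (v j - \<beta> j)) \<le> (\<Sum>j\<in>B. (1 / 2 :: real) ^ j) / a"
    unfolding sum_divide_distrib by (intro sum_mono tail)
  also have "\<dots> \<le> 2 / a"
    using sum_half_powers_le_two[OF \<open>finite B\<close>] a_pos by (intro divide_right_mono) auto
  finally have tails: "(\<Sum>j\<in>B. norm (v j - \<beta> j)) \<le> 2 / a" .
  have "(\<Sum>j\<in>B. v j) = (\<Sum>j\<in>B. \<beta> j) + (\<Sum>j\<in>B. v j - \<beta> j)"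
    by (simp add: sum.distrib[symmetric])
  then have "norm (\<Sum>j\<in>B. v j) \<le> norm (\<Sum>j\<in>B. \<beta> j) + norm (\<Sum>j\<in>B. v j - \<beta> j)"
    by (simp add: norm_triangle_ineq)
  also have "\<dots> \<le> norm (\<Sum>j\<in>B. \<beta> j) + (\<Sum>j\<in>B. norm (v j - \<beta> j))"
    by (simp add: norm_sum)
  also have "\<dots> \<le> real (card B) powr (1 / p) * M / a + 2 / a"
    using blocks tails by (rule add_mono)
  also have "\<dots> = M / a * real (card B) powr (1 / p) + 2 / a"
    by simp
  finally show ?thesis .
qed

lemma sum_estimate_of_coordinatewise_null:
  fixes v :: "nat \<Rightarrow> 'a"
  assumes "bounded (range v)" and null: "\<And>n. (\<lambda>i. L (v i) n) \<longlonglongrightarrow> 0"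
  obtains t :: "nat \<Rightarrow> nat" and K c where "strict_mono t" "0 \<le> K"
    "\<And>B. finite B \<Longrightarrow> norm (\<Sum>j\<in>B. v (t j)) \<le> K * real (card B) powr (1 / p) + c"
proof -
  obtain R where R: "0 < R" "\<And>i. norm (v i) \<le> R"
    using assms(1) by (auto simp: bounded_pos)
  define M where "M = b * R"
  have M: "0 \<le> M" "\<And>i. lp_norm p (L (v i)) \<le> M"
    using order_trans[OF lp_norm_le_norm mult_left_mono[OF R(2)]] R(1) b_pos
    unfolding M_def by simp_all
  obtain t m where t: "strict_mono t" and m: "strict_mono m" and small:
    "\<And>k. lp_sum p (\<lambda>n. if m k \<le> n \<and> n < m (Suc k) then 0 else L (v (t k)) n)
      \<le> ((1 / 2) ^ k) powr p"
    using gliding_hump[OF p_pos L_in_lp_space null, where e = "\<lambda>k. ((1 / 2) ^ k) powr p"] by auto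
  show ?thesis
  proof (rule that[OF t])
    show "0 \<le> M / a"
      using M(1) a_pos by simp
    show "norm (\<Sum>j\<in>B. v (t j)) \<le> M / a * real (card B) powr (1 / p) + 2 / a" if "finite B" for B
      by (rule norm_sum_almost_disjoint_le[where v = "\<lambda>j. v (t j)", OF m M(1) _ small that])
        (rule M(2))
  qed
qed

lemma bounded_sequence_sum_estimate:
  fixes x :: "nat \<Rightarrow> 'a"
  assumes "bounded (range x)"
  obtains s :: "nat \<Rightarrow> nat" and y K c where "strict_mono s" "0 \<le> K"
    "\<And>B. finite B \<Longrightarrow> norm (\<Sum>j\<in>B. x (s j) - y) \<le> K * real (card B) powr (1 / p) + c"
proof -
  obtain s y where s: "strict_mono s" and lim: "\<And>n. (\<lambda>i. L (x (s i)) n) \<longlonglongrightarrow> L y n"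
    using coordinatewise_convergent_subsequence[OF assms] by blast
  obtain R where R: "\<And>i. norm (x i) \<le> R"
    using assms by (auto simp: bounded_iff)
  have "norm (x (s i) - y) \<le> R + norm y" for i
    using R[of "s i"] norm_triangle_ineq4[of "x (s i)" y] by simp
  then have "bounded (range (\<lambda>i. x (s i) - y))"
    by (auto simp: bounded_iff)
  moreover have "(\<lambda>i. L (x (s i) - y) n) \<longlonglongrightarrow> 0" for n
    using tendsto_diff[OF lim[of n] tendsto_const[of "L y n"]] by (simp add: L_diff)
  ultimately obtain t :: "nat \<Rightarrow> nat" and K c where t: "strict_mono t" and K: "0 \<le> K"
    and est: "\<And>B. finite B \<Longrightarrow> norm (\<Sum>j\<in>B. x (s (t j)) - y) \<le> K * real (card B) powr (1 / p) + c"
    by (rule sum_estimate_of_coordinatewise_null) blast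
  show ?thesis
    by (rule that[OF strict_mono_o[OF s t] K]) (use est in simp)
qed

end

section \<open>Fixed points of cm-nonexpansive maps\<close>

lemma nonexpansive_approx_fixed_point:
  fixes C :: "'a::banach set"
  assumes "C \<noteq> {}" "bounded C" "closed C" "convex C" "\<forall>x\<in>C. T x \<in> C"
    and "nonexpansive_on C T" "0 < e"
  shows "\<exists>x\<in>C. norm (T x - x) \<le> e"
proof -
  obtain x0 where x0: "x0 \<in> C"
    using assms(1) by blast
  obtain D where D: "0 < D" "\<And>x. x \<in> C \<Longrightarrow> norm x \<le> D"
    using assms(2) bounded_pos by blast
  define c where "c = e / (2 * D + e)"
  have c: "0 < c" "c < 1"
    using D assms(7) by (auto simp: c_def field_simps)
  define f where "f x = c *\<^sub>R x0 + (1 - c) *\<^sub>R T x" for x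
  have "f ` C \<subseteq> C"
    using assms(4,5) x0 c unfolding f_def convex_def by auto
  moreover have "dist (f x) (f y) \<le> (1 - c) * dist x y" if "x \<in> C" "y \<in> C" for x y
  proof -
    have "f x - f y = (1 - c) *\<^sub>R (T x - T y)"
      by (simp add: f_def algebra_simps)
    then have "dist (f x) (f y) = (1 - c) * norm (T x - T y)"
      using c by (simp add: dist_norm)
    also have "\<dots> \<le> (1 - c) * dist x y"
      using assms(6) that c unfolding nonexpansive_on_def dist_norm by (intro mult_left_mono) auto
    finally show ?thesis .
  qed
  moreover have "complete C"
    using assms(3) by (simp add: complete_eq_closed)
  ultimately obtain x where x: "x \<in> C" "f x = x"
    using Banach_fix[OF _ assms(1), of "1 - c" f] c by auto
  have "T x - x = c *\<^sub>R (T x - x0)"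
    using x(2) by (simp add: f_def algebra_simps)
  then have "norm (T x - x) = c * norm (T x - x0)"
    using c by simp
  also have "\<dots> \<le> c * (2 * D)"
    using norm_triangle_ineq4[of "T x" x0] D(2)[of "T x"] D(2)[OF x0] assms(5) x(1) c
    by (intro mult_left_mono) auto
  also have "\<dots> \<le> e"
    using D assms(7) by (simp add: c_def field_simps)
  finally show ?thesis
    using x(1) by blast
qed

lemma nonexpansive_approx_fixed_points:
  fixes C :: "'a::banach set"
  assumes "C \<noteq> {}" "bounded C" "closed C" "convex C" "\<forall>x\<in>C. T x \<in> C"
    and "nonexpansive_on C T"
  obtains x where "\<And>i. x i \<in> C" "(\<lambda>i. T (x i) - x i) \<longlonglongrightarrow> 0"
proof -
  have "\<forall>i. \<exists>x\<in>C. norm (T x - x) \<le> 1 / real (Suc i)"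
    using nonexpansive_approx_fixed_point[OF assms] by simp
  then obtain x where x: "\<And>i. x i \<in> C" "\<And>i. norm (T (x i) - x i) \<le> 1 / real (Suc i)"
    by metis
  have "(\<lambda>i. 1 / real (Suc i)) \<longlonglongrightarrow> 0"
    by (rule LIMSEQ_Suc[OF lim_1_over_n])
  then have "(\<lambda>i. T (x i) - x i) \<longlonglongrightarrow> 0"
    by (rule Lim_null_comparison[OF always_eventually[OF allI[OF x(2)]]])
  with x(1) show ?thesis
    by (rule that)
qed

lemma mem_closed_convex_if_sums_sublinear:
  fixes u :: "nat \<Rightarrow> 'a::real_normed_vector"
  assumes "closed C" "convex C" "\<And>j. u j \<in> C"
    and sums: "\<And>n. norm (\<Sum>j<n. u j - y) \<le> h n" and h: "(\<lambda>n. h n / real n) \<longlonglongrightarrow> 0"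
  shows "y \<in> C"
proof -
  define mean where "mean n = (\<Sum>j<Suc n. (1 / real (Suc n)) *\<^sub>R u j)" for n
  have mean_in: "mean n \<in> C" for n
    unfolding mean_def by (rule convex_sum[OF _ assms(2)]) (auto simp: assms(3))
  have "mean n - y = (1 / real (Suc n)) *\<^sub>R (\<Sum>j<Suc n. u j - y)" for n
    by (simp add: mean_def sum_subtractf sum_constant_scaleR scaleR_diff_right
        flip: scaleR_sum_right)
  then have close: "norm (mean n - y) \<le> h (Suc n) / real (Suc n)" for n
    using sums[of "Suc n"] by (simp add: divide_right_mono)
  have "(\<lambda>n. mean n - y) \<longlonglongrightarrow> 0"
    by (rule Lim_null_comparison[OF always_eventually[OF allI[OF close]] LIMSEQ_Suc[OF h]])
  then have "mean \<longlonglongrightarrow> y"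
    by (rule LIM_zero_cancel)
  then show "y \<in> C"
    by (rule closed_sequentially[OF assms(1) mean_in])
qed

lemma cm_quantity_le:
  assumes "\<And>i A. A \<subseteq> {1..n} \<Longrightarrow> norm (\<Sum>k\<in>A. v (i + k) - y) \<le> r"
  shows "cm_quantity n v y \<le> ereal r"
  unfolding cm_quantity_def
proof (rule Limsup_bounded[OF always_eventually[OF allI]])
  fix i
  have "Max ((\<lambda>A. norm (\<Sum>k\<in>A. v (i + k) - y)) ` Pow {1..n}) \<le> r"
    using assms by (subst Max_le_iff) auto
  then show "ereal (Max ((\<lambda>A. norm (\<Sum>k\<in>A. v (i + k) - y)) ` Pow {1..n})) \<le> ereal r"
    by simp
qed

lemma cm_quantity_ge:
  assumes "A \<subseteq> {1..n}" "eventually (\<lambda>i. r \<le> norm (\<Sum>k\<in>A. v (i + k) - y)) sequentially"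
  shows "ereal r \<le> cm_quantity n v y"
  unfolding cm_quantity_def
proof (rule le_Limsup)
  show "\<forall>\<^sub>F i in sequentially. ereal r \<le> ereal (Max ((\<lambda>A. norm (\<Sum>k\<in>A. v (i + k) - y)) ` Pow {1..n}))"
    using assms(2)
  proof eventually_elim
    case (elim i)
    have "norm (\<Sum>k\<in>A. v (i + k) - y) \<le> Max ((\<lambda>A. norm (\<Sum>k\<in>A. v (i + k) - y)) ` Pow {1..n})"
      using assms(1) by (intro Max_ge) auto
    with elim show ?case
      by simp
  qed
qed simp

lemma cm_nonexpansive_defect_bound:
  fixes C :: "'a::real_normed_vector set"
  assumes T: "cm_nonexpansive C T" and "y \<in> C" and u: "\<And>j. u j \<in> C"
    and approx: "(\<lambda>i. T (u i) - u i) \<longlonglongrightarrow> 0" and "1 \<le> n"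
    and window: "\<And>i A. A \<subseteq> {1..n} \<Longrightarrow> norm (\<Sum>k\<in>A. u (i + k) - y) \<le> r"
  shows "real n * norm (y - T y) \<le> 2 * r + 1"
proof -
  have "0 < 1 / real n"
    using \<open>1 \<le> n\<close> by simp
  from approx[unfolded LIMSEQ_iff, rule_format, OF this] obtain N where
    N: "\<And>j. N \<le> j \<Longrightarrow> norm (T (u j) - u j) < 1 / real n"
    by auto
  have "ereal (real n * norm (y - T y) - r - 1) \<le> cm_quantity n (\<lambda>i. T (u i)) (T y)"
  proof (rule cm_quantity_ge[of "{1..n}"])
    show "eventually (\<lambda>i. real n * norm (y - T y) - r - 1
        \<le> norm (\<Sum>k\<in>{1..n}. T (u (i + k)) - T y)) sequentially"
      using eventually_ge_at_top[of N]
    proof eventually_elim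
      case (elim i)
      let ?S = "\<Sum>k\<in>{1..n}. T (u (i + k)) - T y"
      let ?U = "\<Sum>k\<in>{1..n}. u (i + k) - y"
      let ?E = "\<Sum>k\<in>{1..n}. T (u (i + k)) - u (i + k)"
      have "norm ?E \<le> (\<Sum>k\<in>{1..n}. norm (T (u (i + k)) - u (i + k)))"
        by (rule norm_sum)
      also have "\<dots> \<le> (\<Sum>k\<in>{1..n}. 1 / real n)"
        using N elim by (intro sum_mono less_imp_le) auto
      also have "\<dots> = 1"
        using \<open>1 \<le> n\<close> by simp
      finally have "norm ?E \<le> 1" .
      have "real n * norm (y - T y) = norm (real n *\<^sub>R (y - T y))"
        by simp
      also have "real n *\<^sub>R (y - T y) = ?S - ?U - ?E"
        by (simp add: sum_subtractf sum_constant_scaleR algebra_simps)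
      also have "norm (?S - ?U - ?E) \<le> norm ?S + norm ?U + norm ?E"
        using norm_triangle_ineq4[of "?S - ?U" ?E] norm_triangle_ineq4[of ?S ?U] by linarith
      finally show ?case
        using window[where A = "{1..n}" and i = i] \<open>norm ?E \<le> 1\<close> by simp
    qed
  qed simp
  also have "\<dots> \<le> cm_quantity n u y"
    using T \<open>y \<in> C\<close> u unfolding cm_nonexpansive_def by blast
  also have "\<dots> \<le> ereal r"
    by (rule cm_quantity_le) (rule window)
  finally show ?thesis
    by simp
qed

lemma cm_nonexpansive_fixed_point_if_sums_sublinear:
  fixes C :: "'a::real_normed_vector set"
  assumes T: "cm_nonexpansive C T" and "y \<in> C" and u: "\<And>j. u j \<in> C"
    and approx: "(\<lambda>i. T (u i) - u i) \<longlonglongrightarrow> 0"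
    and g: "mono g" "(\<lambda>n. g n / real n) \<longlonglongrightarrow> 0"
    and sums: "\<And>B. finite B \<Longrightarrow> norm (\<Sum>j\<in>B. u j - y) \<le> g (card B)"
  shows "T y = y"
proof -
  have window: "norm (\<Sum>k\<in>A. u (i + k) - y) \<le> g n" if "A \<subseteq> {1..n}" for i A n
  proof -
    have "finite A" "card A \<le> n"
      using that finite_subset card_mono[OF _ that] by auto
    have inj: "inj_on ((+) i) A"
      by simp
    have "norm (\<Sum>k\<in>A. u (i + k) - y) = norm (\<Sum>j\<in>(+) i ` A. u j - y)"
      by (simp add: sum.reindex[OF inj])
    also have "\<dots> \<le> g (card A)"
      using sums[of "(+) i ` A"] \<open>finite A\<close> card_image[OF inj] by simp
    also have "\<dots> \<le> g n"
      using g(1) \<open>card A \<le> n\<close> by (rule monoD)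
    finally show ?thesis .
  qed
  have "(\<lambda>n. 2 * (g n / real n) + 1 / real n) \<longlonglongrightarrow> 2 * 0 + 0"
    by (intro tendsto_intros g(2) lim_1_over_n)
  moreover have "norm (y - T y) \<le> 2 * (g n / real n) + 1 / real n" if "1 \<le> n" for n
    using cm_nonexpansive_defect_bound[OF T \<open>y \<in> C\<close> u approx that window] that
    by (simp add: field_simps)
  ultimately have "norm (y - T y) \<le> 0"
    by (intro LIMSEQ_le_const) auto
  then show "T y = y"
    by simp
qed

lemma LIMSEQ_powr_sublinear:
  fixes p K c :: real
  assumes "1 < p"
  shows "(\<lambda>n. (K * real n powr (1 / p) + c) / real n) \<longlonglongrightarrow> 0"
proof -
  have "(\<lambda>n. real n powr (1 / p - 1)) \<longlonglongrightarrow> 0"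
    using assms by (intro tendsto_neg_powr filterlim_real_sequentially) (auto simp: field_simps)
  then have "(\<lambda>n. K * real n powr (1 / p - 1) + c * (1 / real n)) \<longlonglongrightarrow> K * 0 + c * 0"
    by (intro tendsto_intros lim_1_over_n)
  moreover have "eventually (\<lambda>n. K * real n powr (1 / p - 1) + c * (1 / real n)
      = (K * real n powr (1 / p) + c) / real n) sequentially"
    using eventually_gt_at_top[of "0::nat"]
    by eventually_elim (simp add: powr_diff field_simps)
  ultimately show ?thesis
    using Lim_transform_eventually by fastforce
qed

lemma fixed_point_if_sum_estimate:
  fixes C :: "'a::real_normed_vector set"
  assumes "1 < p" "0 \<le> K" "closed C" "convex C" "cm_nonexpansive C T"
    and u: "\<And>j. u j \<in> C" and approx: "(\<lambda>i. T (u i) - u i) \<longlonglongrightarrow> 0"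
    and sums: "\<And>B. finite B \<Longrightarrow> norm (\<Sum>j\<in>B. u j - y) \<le> K * real (card B) powr (1 / p) + c"
  shows "y \<in> C" and "T y = y"
proof -
  define g where "g n = K * real n powr (1 / p) + c" for n :: nat
  have "mono g"
  proof (rule monoI)
    fix m n :: nat
    assume "m \<le> n"
    then have "real m powr (1 / p) \<le> real n powr (1 / p)"
      using assms(1) by (intro powr_mono2) auto
    then show "g m \<le> g n"
      unfolding g_def using \<open>0 \<le> K\<close> by (simp add: mult_left_mono)
  qed
  have g_sublinear: "(\<lambda>n. g n / real n) \<longlonglongrightarrow> 0"
    unfolding g_def using assms(1) by (rule LIMSEQ_powr_sublinear)
  have sums_g: "norm (\<Sum>j\<in>B. u j - y) \<le> g (card B)" if "finite B" for B
    using sums[OF that] by (simp add: g_def)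
  show "y \<in> C"
    using sums_g[of "{..<n}" for n]
    by (intro mem_closed_convex_if_sums_sublinear[OF assms(3,4) u _ g_sublinear]) simp
  then show "T y = y"
    by (rule cm_nonexpansive_fixed_point_if_sums_sublinear[OF assms(5) _ u approx \<open>mono g\<close> g_sublinear sums_g])
qed

theorem corollary4p10:
  fixes p :: real and C :: "'a::banach set" and T :: "'a \<Rightarrow> 'a"
  assumes "1 < p"
    and "isomorphic_to_lp p TYPE('a)"
    and "C \<noteq> {}" and "bounded C" and "closed C" and "convex C"
    and "cm_nonexpansive C T"
  shows "\<exists>x\<in>C. T x = x"
proof -
  have p: "0 < p"
    using assms(1) by simp
  have "\<forall>x\<in>C. T x \<in> C" "nonexpansive_on C T"
    using assms(7) unfolding cm_nonexpansive_def by auto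
  then obtain x where x: "\<And>i. x i \<in> C" and approx: "(\<lambda>i. T (x i) - x i) \<longlonglongrightarrow> 0"
    using nonexpansive_approx_fixed_points[OF assms(3-6)] by blast
  obtain L :: "'a \<Rightarrow> nat \<Rightarrow> real" and a b where iso: "lp_isomorphism p L a b"
    using isomorphic_to_lpE[OF p assms(2)] .
  have "bounded (range x)"
    by (rule bounded_subset[OF assms(4)]) (use x in blast)
  then obtain s :: "nat \<Rightarrow> nat" and y K c where s: "strict_mono s" and "0 \<le> K"
    and sums: "\<And>B. finite B \<Longrightarrow> norm (\<Sum>j\<in>B. x (s j) - y) \<le> K * real (card B) powr (1 / p) + c"
    by (rule lp_isomorphism.bounded_sequence_sum_estimate[OF iso]) blast
  have "(\<lambda>i. T (x (s i)) - x (s i)) \<longlonglongrightarrow> 0"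
    using LIMSEQ_subseq_LIMSEQ[OF approx s] by (simp add: o_def)
  from fixed_point_if_sum_estimate[where u = "\<lambda>i. x (s i)", OF assms(1) \<open>0 \<le> K\<close> assms(5-7) x this sums]
  show ?thesis
    by blast
qed

end
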